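(* Consider a secure index coding problem $(W_i\mid A_i,P_i)$, $i\in[m]$, on $n$ messages, a securely achievable symmetric rate $R$, and a set function $g:2^{[n]}\to\mathbb R$ satisfying conditions (G1)–(G6) of the context with $R_i=R$ for all $i$. Let $L_1,L_2,\ldots,L_k\subseteq[n]$ be such that for every $j\in[k-1]$ either $L_j - L_{j+1}$ or $L_j\subseteq L_{j+1}$. Then $$g(L_k)\ge g(L_1)+R\cdot\sum_{\ell\in[k-1]}h(L_\ell,L_{\ell+1}).$$
   Context: Secure index coding: $n$ independent uniformly distributed messages $X_i\in\{0,1\}^{t_i}$; $m$ parties, party $i$ with side information $A_i\subseteq[n]$, requested set $W_i\subseteq[n]\setminus A_i$ (possibly empty), interfering set $B_i=[n]\setminus(A_i\cup W_i)$, prohibited set $P_i\subseteq B_i$. A $(\mathbf t,M)$ secure index code is a deterministic surjective encoder $Y=\phi(X_{[n]})\in\{1,\ldots,M\}$ with $H(X_{W_i}\mid Y,X_{A_i})=0$ for all $i$ and $I(X_j;Y\mid X_{A_i})=0$ for all $j\in P_i$; rates $R_i=t_i/\log M$. Standing assumption: the problem is feasible (its symmetric secure capacity is positive). Conditions on $g$: (G1) $\sum_{i\in W}R_i=g(B\cup W)-g(B)=g(W)$ for all $i\in[m]$, $W\subseteq W_i$, $B\subseteq (B_i\cup W_i)\setminus W$; (G2) $g(\emptyset)=0$; (G3) $g([n])\le1$; (G4) $g(S)\le g(S')$ whenever $S\subseteq S'$; (G5) $g(S\cap S')+g(S\cup S')\le g(S)+g(S')$; (G6) $g(B_i)=g(B_i\setminus\{j\})$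 for all $j\in P_i$, $i\in[m]$. Relation $S - S'$: for each $i$ with $P_i\ne\emptyset$ and $T\subseteq[n]\setminus B_i$, $N(i,T)=\{T\cup B_i\setminus\{j\}:j\in P_i\}\cup\{T\cup B_i\}$; repeatedly merge intersecting such families until pairwise disjoint; $S - S'$ iff $S,S'$ lie in the same resulting family. Acyclic sets: $K\subseteq[n]\setminus S$ is acyclic w.r.t. $S$ if it can be ordered $K=\{k_1,\ldots,k_r\}$ so that for each $\ell$ some party $j_\ell$ has $k_\ell\in W_{j_\ell}$ and $S\cup\{k_1,\ldots,k_\ell\}\subseteq B_{j_\ell}\cup W_{j_\ell}$. For $S\subseteq S'$, $h_{\rm MAIS}(S,S')=\max\{|K|:K\subseteq S'\setminus S\text{ acyclic w.r.t. }S\}$. For any $S,S'\subseteq[n]$, $h(S,S')=h_{\rm MAIS}(S,S')$ if $S\subseteq S'$ and $h(S,S')=0$ otherwise. *)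

theory Defs
  imports "HOL-Probability.Probability"
begin

(* Messages are indexed by {..<n} (the paper's [n]), parties by {..<m}.
   A realisation of all messages is x :: nat => nat => bool, where x i is the
   bit string X_i in {0,1}^(t i) (bits b >= t i and messages i >= n are False). *)

type_synonym msgs = "nat \<Rightarrow> nat \<Rightarrow> bool"

definition msg_space :: "nat \<Rightarrow> (nat \<Rightarrow> nat) \<Rightarrow> msgs set" where
  "msg_space n t = {x. \<forall>i b. (n \<le> i \<or> t i \<le> b) \<longrightarrow> \<not> x i b}"

definition Bset :: "nat \<Rightarrow> (nat \<Rightarrow> nat set) \<Rightarrow> (nat \<Rightarrow> nat set) \<Rightarrow> nat \<Rightarrow> nat set" where
  "Bset n A W i = {..<n} - (A i \<union> W i)"

definition sic_problem :: "nat \<Rightarrow> nat \<Rightarrow> (nat \<Rightarrow> nat set) \<Rightarrow> (nat \<Rightarrow> nat set) \<Rightarrow> (nat \<Rightarrow> nat set) \<Rightarrow> bool" where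
  "sic_problem n m A W P \<longleftrightarrow>
     (\<forall>i<m. A i \<subseteq> {..<n} \<and> W i \<subseteq> {..<n} - A i \<and> P i \<subseteq> Bset n A W i)"

(* (t,M) secure index code: deterministic surjective encoder phi onto {1..M};
   messages independent and uniform, i.e. X_[n] uniform on msg_space n t;
   H(X_{W_i} | Y, X_{A_i}) = 0 and I(X_j ; Y | X_{A_i}) = 0 for j in P_i
   (information measures in bits, from HOL-Probability). *)
definition secure_index_code ::
  "nat \<Rightarrow> nat \<Rightarrow> (nat \<Rightarrow> nat set) \<Rightarrow> (nat \<Rightarrow> nat set) \<Rightarrow> (nat \<Rightarrow> nat set)
   \<Rightarrow> (nat \<Rightarrow> nat) \<Rightarrow> nat \<Rightarrow> (msgs \<Rightarrow> nat) \<Rightarrow> bool" where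
  "secure_index_code n m A W P t M \<phi> \<longleftrightarrow>
     (\<forall>i<n. 0 < t i) \<and>
     \<phi> ` msg_space n t = {1..M} \<and>
     (let S = msg_space n t; \<mu> = uniform_count_measure S in
       (\<forall>i<m.
          prob_space.conditional_entropy \<mu> 2
            (count_space ((\<lambda>x. restrict x (W i)) ` S))
            (count_space ((\<lambda>x. (\<phi> x, restrict x (A i))) ` S))
            (\<lambda>x. restrict x (W i)) (\<lambda>x. (\<phi> x, restrict x (A i))) = 0) \<and>
       (\<forall>i<m. \<forall>j\<in>P i.
          prob_space.conditional_mutual_information \<mu> 2
            (count_space ((\<lambda>x. x j) ` S)) (count_space (\<phi> ` S))
            (count_space ((\<lambda>x. restrict x (A i)) ` S))
            (\<lambda>x. x j) \<phi> (\<lambda>x. restrict x (A i)) = 0))"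

(* symmetric rate R securely achievable: for every eps > 0 there is a secure
   (t,M) code with t_i / log M >= R - eps for all i (stated multiplied out). *)
definition sym_securely_achievable ::
  "nat \<Rightarrow> nat \<Rightarrow> (nat \<Rightarrow> nat set) \<Rightarrow> (nat \<Rightarrow> nat set) \<Rightarrow> (nat \<Rightarrow> nat set) \<Rightarrow> real \<Rightarrow> bool" where
  "sym_securely_achievable n m A W P R \<longleftrightarrow>
     (\<forall>\<epsilon>>0. \<exists>t M \<phi>. secure_index_code n m A W P t M \<phi> \<and>
        (\<forall>i<n. (R - \<epsilon>) * log 2 (real M) \<le> real (t i)))"

definition sic_feasible :: "nat \<Rightarrow> nat \<Rightarrow> (nat \<Rightarrow> nat set) \<Rightarrow> (nat \<Rightarrow> nat set) \<Rightarrow> (nat \<Rightarrow> nat set) \<Rightarrow> bool" where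
  "sic_feasible n m A W P \<longleftrightarrow> (\<exists>R>0. sym_securely_achievable n m A W P R)"

definition g_conditions ::
  "nat \<Rightarrow> nat \<Rightarrow> (nat \<Rightarrow> nat set) \<Rightarrow> (nat \<Rightarrow> nat set) \<Rightarrow> (nat \<Rightarrow> nat set) \<Rightarrow> real \<Rightarrow> (nat set \<Rightarrow> real) \<Rightarrow> bool" where
  "g_conditions n m A W P R g \<longleftrightarrow>
     (\<forall>i<m. \<forall>V B. V \<subseteq> W i \<longrightarrow> B \<subseteq> (Bset n A W i \<union> W i) - V \<longrightarrow>
         R * real (card V) = g (B \<union> V) - g B \<and> g (B \<union> V) - g B = g V) \<and>
     g {} = 0 \<and>
     g {..<n} \<le> 1 \<and>
     (\<forall>S S'. S \<subseteq> S' \<longrightarrow> S' \<subseteq> {..<n} \<longrightarrow> g S \<le> g S') \<and>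
     (\<forall>S S'. S \<subseteq> {..<n} \<longrightarrow> S' \<subseteq> {..<n} \<longrightarrow> g (S \<inter> S') + g (S \<union> S') \<le> g S + g S') \<and>
     (\<forall>i<m. \<forall>j\<in>P i. g (Bset n A W i) = g (Bset n A W i - {j}))"

definition Nfam :: "nat \<Rightarrow> (nat \<Rightarrow> nat set) \<Rightarrow> (nat \<Rightarrow> nat set) \<Rightarrow> (nat \<Rightarrow> nat set) \<Rightarrow> nat \<Rightarrow> nat set \<Rightarrow> nat set set" where
  "Nfam n A W P i T = {T \<union> Bset n A W i - {j} | j. j \<in> P i} \<union> {T \<union> Bset n A W i}"

definition Nfams :: "nat \<Rightarrow> nat \<Rightarrow> (nat \<Rightarrow> nat set) \<Rightarrow> (nat \<Rightarrow> nat set) \<Rightarrow> (nat \<Rightarrow> nat set) \<Rightarrow> nat set set set" where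
  "Nfams n m A W P = {Nfam n A W P i T | i T. i < m \<and> P i \<noteq> {} \<and> T \<subseteq> {..<n} - Bset n A W i}"

(* repeatedly merging intersecting families until pairwise disjoint yields the
   classes of the transitive closure of "lie in a common family"; S - S' iff
   S and S' lie in the same resulting (merged) family. *)
definition rel_dash :: "nat \<Rightarrow> nat \<Rightarrow> (nat \<Rightarrow> nat set) \<Rightarrow> (nat \<Rightarrow> nat set) \<Rightarrow> (nat \<Rightarrow> nat set) \<Rightarrow> nat set \<Rightarrow> nat set \<Rightarrow> bool" where
  "rel_dash n m A W P S S' \<longleftrightarrow>
     (S, S') \<in> {(X, Y). \<exists>F\<in>Nfams n m A W P. X \<in> F \<and> Y \<in> F}\<^sup>+"

definition acyclic_wrt :: "nat \<Rightarrow> nat \<Rightarrow> (nat \<Rightarrow> nat set) \<Rightarrow> (nat \<Rightarrow> nat set) \<Rightarrow> nat set \<Rightarrow> nat set \<Rightarrow> bool" where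
  "acyclic_wrt n m A W S K \<longleftrightarrow>
     K \<subseteq> {..<n} - S \<and>
     (\<exists>ks. distinct ks \<and> set ks = K \<and>
        (\<forall>l<length ks. \<exists>j<m. ks ! l \<in> W j \<and>
            S \<union> set (take (Suc l) ks) \<subseteq> Bset n A W j \<union> W j))"

definition h_MAIS :: "nat \<Rightarrow> nat \<Rightarrow> (nat \<Rightarrow> nat set) \<Rightarrow> (nat \<Rightarrow> nat set) \<Rightarrow> nat set \<Rightarrow> nat set \<Rightarrow> nat" where
  "h_MAIS n m A W S S' = Max {card K | K. K \<subseteq> S' - S \<and> acyclic_wrt n m A W S K}"

definition h_fun :: "nat \<Rightarrow> nat \<Rightarrow> (nat \<Rightarrow> nat set) \<Rightarrow> (nat \<Rightarrow> nat set) \<Rightarrow> nat set \<Rightarrow> nat set \<Rightarrow> nat" where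
  "h_fun n m A W S S' = (if S \<subseteq> S' then h_MAIS n m A W S S' else 0)"

end

theory Submission
  imports Defs
begin

(* Along the chain, g never decreases: a step S - S' keeps g fixed, because
   (G6) says that dropping a prohibited message j from B_i does not lower g,
   and submodularity propagates this to every superset T \<union> B_i, so g is
   constant on each family N(i,T) and hence on each merged family.  A step
   S \<subseteq> S' raises g by at least R h(S,S'): decoding the messages of a maximum
   acyclic set K \<subseteq> S' - S one after another, each one is requested by a party
   whose interfering and requested messages cover all the messages added so
   far, so (G1) makes it increase g by exactly R; monotonicity gives
   g S + R |K| = g (S \<union> K) \<le> g S'. *)

lemma submodular_remove_eq_upward:
  fixes g :: "'a set \<Rightarrow> 'b::ordered_ab_group_add"
  assumes mono: "\<And>S S'. S \<subseteq> S' \<Longrightarrow> S' \<subseteq> U \<Longrightarrow> g S \<le> g S'"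
    and submod: "\<And>S S'. S \<subseteq> U \<Longrightarrow> S' \<subseteq> U \<Longrightarrow> g (S \<inter> S') + g (S \<union> S') \<le> g S + g S'"
    and "j \<in> B" "B \<subseteq> X" "X \<subseteq> U" "g (B - {j}) = g B"
  shows "g (X - {j}) = g X"
proof (rule antisym)
  show "g (X - {j}) \<le> g X" using mono[OF Diff_subset \<open>X \<subseteq> U\<close>] .
  have "g (B \<inter> (X - {j})) + g (B \<union> (X - {j})) \<le> g B + g (X - {j})"
    using submod assms(4,5) by (meson Diff_subset order_trans)
  moreover have "B \<inter> (X - {j}) = B - {j}" "B \<union> (X - {j}) = X" using assms(3,4) by auto
  ultimately have "g (B - {j}) + g X \<le> g B + g (X - {j})" by simp
  then show "g X \<le> g (X - {j})" using \<open>g (B - {j}) = g B\<close> by simp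
qed

lemma telescoping_sum_le:
  fixes f d :: "nat \<Rightarrow> 'b::ordered_ab_group_add"
  assumes "a \<le> b" and "\<And>j. a \<le> j \<Longrightarrow> j < b \<Longrightarrow> f j + d j \<le> f (Suc j)"
  shows "f a + (\<Sum>j\<in>{a..<b}. d j) \<le> f b"
  using assms
proof (induction b rule: dec_induct)
  case base
  then show ?case by simp
next
  case (step b)
  have "f a + (\<Sum>j\<in>{a..<Suc b}. d j) = (f a + (\<Sum>j\<in>{a..<b}. d j)) + d b"
    using step.hyps by (simp add: add.assoc)
  also have "\<dots> \<le> f b + d b" using step by (simp add: add_right_mono)
  also have "\<dots> \<le> f (Suc b)" using step by simp
  finally show ?case .
qed

lemma g_conditions_gain:
  assumes "g_conditions n m A W P R g" "i < m" "V \<subseteq> W i" "B \<subseteq> Bset n A W i \<union> W i - V"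
  shows "g (B \<union> V) = g B + R * real (card V)"
proof -
  have "\<forall>i<m. \<forall>V B. V \<subseteq> W i \<longrightarrow> B \<subseteq> (Bset n A W i \<union> W i) - V \<longrightarrow>
      R * real (card V) = g (B \<union> V) - g B \<and> g (B \<union> V) - g B = g V"
    using assms(1) unfolding g_conditions_def by (elim conjE)
  with assms(2-4) have "R * real (card V) = g (B \<union> V) - g B" by blast
  then show ?thesis by simp
qed

lemma g_conditions_mono:
  assumes "g_conditions n m A W P R g" "S \<subseteq> S'" "S' \<subseteq> {..<n}"
  shows "g S \<le> g S'"
proof -
  have "\<forall>S S'. S \<subseteq> S' \<longrightarrow> S' \<subseteq> {..<n} \<longrightarrow> g S \<le> g S'"
    using assms(1) unfolding g_conditions_def by (elim conjE)
  with assms(2,3) show ?thesis by blast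
qed

lemma g_conditions_submodular:
  assumes "g_conditions n m A W P R g" "S \<subseteq> {..<n}" "S' \<subseteq> {..<n}"
  shows "g (S \<inter> S') + g (S \<union> S') \<le> g S + g S'"
proof -
  have "\<forall>S S'. S \<subseteq> {..<n} \<longrightarrow> S' \<subseteq> {..<n} \<longrightarrow> g (S \<inter> S') + g (S \<union> S') \<le> g S + g S'"
    using assms(1) unfolding g_conditions_def by (elim conjE)
  with assms(2,3) show ?thesis by blast
qed

lemma g_conditions_prohibited:
  assumes "g_conditions n m A W P R g" "i < m" "j \<in> P i"
  shows "g (Bset n A W i - {j}) = g (Bset n A W i)"
proof -
  have "\<forall>i<m. \<forall>j\<in>P i. g (Bset n A W i) = g (Bset n A W i - {j})"
    using assms(1) unfolding g_conditions_def by (elim conjE)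
  with assms(2,3) show ?thesis by simp
qed

lemma g_eq_on_Nfam:
  assumes gc: "g_conditions n m A W P R g" and prob: "sic_problem n m A W P"
    and "i < m" "T \<subseteq> {..<n} - Bset n A W i" "X \<in> Nfam n A W P i T"
  shows "g X = g (T \<union> Bset n A W i)"
proof -
  let ?B = "Bset n A W i"
  have B_le: "?B \<subseteq> {..<n}" unfolding Bset_def by auto
  show ?thesis
  proof (cases "X = T \<union> ?B")
    case False
    then obtain j where j: "j \<in> P i" and X: "X = T \<union> ?B - {j}"
      using assms(5) unfolding Nfam_def by blast
    have "j \<in> ?B" using prob \<open>i < m\<close> j unfolding sic_problem_def by blast
    moreover have "T \<union> ?B \<subseteq> {..<n}" using B_le assms(4) by blast
    ultimately have "g (T \<union> ?B - {j}) = g (T \<union> ?B)"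
      using submodular_remove_eq_upward[where U = "{..<n}"] g_conditions_mono[OF gc]
        g_conditions_submodular[OF gc] g_conditions_prohibited[OF gc \<open>i < m\<close> j]
      by blast
    then show ?thesis using X by simp
  qed simp
qed

lemma g_eq_if_rel_dash:
  assumes gc: "g_conditions n m A W P R g" and prob: "sic_problem n m A W P"
    and "rel_dash n m A W P S S'"
  shows "g S = g S'"
proof -
  have same_family: "g X = g Y" if F: "F \<in> Nfams n m A W P" and XY: "X \<in> F" "Y \<in> F" for F X Y
  proof -
    obtain i T where "F = Nfam n A W P i T" "i < m" "T \<subseteq> {..<n} - Bset n A W i"
      using F unfolding Nfams_def by blast
    with XY g_eq_on_Nfam[OF gc prob] show ?thesis by metis
  qed
  from assms(3) show ?thesis
    unfolding rel_dash_def
  proof (induction rule: trancl_induct)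
    case (base Y)
    then show ?case using same_family by blast
  next
    case (step Y Z)
    then obtain F where F: "F \<in> Nfams n m A W P" "Y \<in> F" "Z \<in> F" by blast
    show ?case using step.IH same_family[OF F] by simp
  qed
qed

lemma g_union_acyclic_prefix:
  assumes gc: "g_conditions n m A W P R g"
    and ks: "distinct ks" "set ks \<inter> S = {}"
    and order: "\<forall>l<length ks. \<exists>j<m. ks ! l \<in> W j \<and> S \<union> set (take (Suc l) ks) \<subseteq> Bset n A W j \<union> W j"
    and "l \<le> length ks"
  shows "g (S \<union> set (take l ks)) = g S + R * l"
  using \<open>l \<le> length ks\<close>
proof (induction l)
  case 0
  then show ?case by simp
next
  case (Suc l)
  then have l: "l < length ks" by simp
  obtain j where j: "j < m" "ks ! l \<in> W j" "S \<union> set (take (Suc l) ks) \<subseteq> Bset n A W j \<union> W j"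
    using order l by blast
  have prefix_Suc: "set (take (Suc l) ks) = insert (ks ! l) (set (take l ks))"
    using l by (simp add: take_Suc_conv_app_nth)
  have "ks ! l \<notin> set (take l ks)"
    using distinct_take[OF ks(1), of "Suc l"] l by (simp add: take_Suc_conv_app_nth)
  moreover have "ks ! l \<notin> S" using ks(2) nth_mem[OF l] by blast
  ultimately have "S \<union> set (take l ks) \<subseteq> Bset n A W j \<union> W j - {ks ! l}"
    using j(3) prefix_Suc by blast
  from g_conditions_gain[OF gc j(1) _ this] j(2)
  have gain: "g (S \<union> set (take l ks) \<union> {ks ! l}) = g (S \<union> set (take l ks)) + R" by simp
  have "S \<union> set (take (Suc l) ks) = S \<union> set (take l ks) \<union> {ks ! l}"
    using prefix_Suc by blast
  then have "g (S \<union> set (take (Suc l) ks)) = g (S \<union> set (take l ks)) + R"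
    by (simp only: gain)
  also have "\<dots> = g S + R * Suc l" using Suc.IH l by (simp add: distrib_left)
  finally show ?case .
qed

lemma h_MAIS_attained:
  assumes "finite S'"
  obtains K where "h_MAIS n m A W S S' = card K" "K \<subseteq> S' - S" "acyclic_wrt n m A W S K"
proof -
  let ?C = "{card K | K. K \<subseteq> S' - S \<and> acyclic_wrt n m A W S K}"
  have "acyclic_wrt n m A W S {}" unfolding acyclic_wrt_def by simp
  then have nonempty: "?C \<noteq> {}" by blast
  have "?C \<subseteq> card ` Pow (S' - S)" by blast
  then have "finite ?C" using assms by (simp add: finite_surj)
  from this nonempty have "h_MAIS n m A W S S' \<in> ?C" unfolding h_MAIS_def by (rule Max_in)
  then show ?thesis using that by blast
qed

lemma g_add_h_MAIS_le:
  assumes gc: "g_conditions n m A W P R g" and "S \<subseteq> S'" "S' \<subseteq> {..<n}"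
  shows "g S + R * h_MAIS n m A W S S' \<le> g S'"
proof -
  have "finite S'" using assms(3) finite_subset by blast
  then obtain K where K: "h_MAIS n m A W S S' = card K" "K \<subseteq> S' - S" "acyclic_wrt n m A W S K"
    by (rule h_MAIS_attained)
  then obtain ks where ks: "distinct ks" "set ks = K"
    "\<forall>l<length ks. \<exists>j<m. ks ! l \<in> W j \<and> S \<union> set (take (Suc l) ks) \<subseteq> Bset n A W j \<union> W j"
    unfolding acyclic_wrt_def by blast
  have "g (S \<union> K) = g S + R * card K"
    using g_union_acyclic_prefix[OF gc ks(1) _ ks(3) order.refl] ks K(2) distinct_card by fastforce
  moreover have "g (S \<union> K) \<le> g S'"
    using g_conditions_mono[OF gc _ assms(3)] assms(2) K(2) by blast
  ultimately show ?thesis using K(1) by simp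
qed

lemma g_add_h_fun_le:
  assumes gc: "g_conditions n m A W P R g" and prob: "sic_problem n m A W P"
    and "S' \<subseteq> {..<n}" "rel_dash n m A W P S S' \<or> S \<subseteq> S'"
  shows "g S + R * h_fun n m A W S S' \<le> g S'"
  using assms g_add_h_MAIS_le[OF gc] g_eq_if_rel_dash[OF gc prob]
  unfolding h_fun_def by auto

theorem lemma3:
  fixes n m k :: nat and A W P :: "nat \<Rightarrow> nat set" and R :: real
    and g :: "nat set \<Rightarrow> real" and L :: "nat \<Rightarrow> nat set"
  assumes prob: "sic_problem n m A W P"
    and feas: "sic_feasible n m A W P"
    and ach: "sym_securely_achievable n m A W P R"
    and gc: "g_conditions n m A W P R g"
    and k: "1 \<le> k"
    and L_sub: "\<forall>j\<in>{1..k}. L j \<subseteq> {..<n}"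
    and chain: "\<forall>j\<in>{1..<k}. rel_dash n m A W P (L j) (L (Suc j)) \<or> L j \<subseteq> L (Suc j)"
  shows "g (L k) \<ge> g (L 1) + R * (\<Sum>l\<in>{1..<k}. real (h_fun n m A W (L l) (L (Suc l))))"
proof -
  have "g (L 1) + (\<Sum>l\<in>{1..<k}. R * h_fun n m A W (L l) (L (Suc l))) \<le> g (L k)"
  proof (rule telescoping_sum_le[OF k])
    fix j assume "1 \<le> j" "j < k"
    with L_sub chain show "g (L j) + R * h_fun n m A W (L j) (L (Suc j)) \<le> g (L (Suc j))"
      by (intro g_add_h_fun_le[OF gc prob]) auto
  qed
  then show ?thesis by (simp add: sum_distrib_left)
qed

end
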